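(* For any tree $T$ with at least four vertices, $\mu(T)\le\mu'(T)$, with equality only when $T$ is the path $P_4$ on four vertices.
   Context: A leaf is a vertex of degree at most 1. $\mathcal{S}(T)$ is the set of nonempty subsets of $V(T)$ inducing a connected subgraph (subtrees), and $\mu(T)$ is the average cardinality of a set in $\mathcal{S}(T)$. $\mathcal{S}'(T)$ is obtained from $\mathcal{S}(T)$ by adding the empty set and removing the singleton $\{v\}$ for every leaf $v$ (other singletons remain). $\mu'(T)$ is the average cardinality of a set in $\mathcal{S}'(T)$ (the empty set counting with cardinality 0). *)

theory Defs
  imports Complex_Main
begin

definition simple_graph :: "'a set \<Rightarrow> ('a \<Rightarrow> 'a \<Rightarrow> bool) \<Rightarrow> bool" where
  "simple_graph V E \<longleftrightarrow> finite V \<and> (\<forall>x y. E x y \<longrightarrow> x \<in> V \<and> y \<in> V \<and> x \<noteq> y \<and> E y x)"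

definition induces_connected :: "('a \<Rightarrow> 'a \<Rightarrow> bool) \<Rightarrow> 'a set \<Rightarrow> bool" where
  "induces_connected E S \<longleftrightarrow>
     (\<forall>x\<in>S. \<forall>y\<in>S. (\<lambda>u v. u \<in> S \<and> v \<in> S \<and> E u v)\<^sup>*\<^sup>* x y)"

definition edges :: "'a set \<Rightarrow> ('a \<Rightarrow> 'a \<Rightarrow> bool) \<Rightarrow> 'a set set" where
  "edges V E = {{x, y} | x y. x \<in> V \<and> y \<in> V \<and> E x y}"

definition is_tree :: "'a set \<Rightarrow> ('a \<Rightarrow> 'a \<Rightarrow> bool) \<Rightarrow> bool" where
  "is_tree V E \<longleftrightarrow> simple_graph V E \<and> V \<noteq> {} \<and> induces_connected E V
     \<and> card (edges V E) + 1 = card V"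

definition degree :: "'a set \<Rightarrow> ('a \<Rightarrow> 'a \<Rightarrow> bool) \<Rightarrow> 'a \<Rightarrow> nat" where
  "degree V E v = card {u \<in> V. E v u}"

definition is_leaf :: "'a set \<Rightarrow> ('a \<Rightarrow> 'a \<Rightarrow> bool) \<Rightarrow> 'a \<Rightarrow> bool" where
  "is_leaf V E v \<longleftrightarrow> v \<in> V \<and> degree V E v \<le> 1"

definition subtrees :: "'a set \<Rightarrow> ('a \<Rightarrow> 'a \<Rightarrow> bool) \<Rightarrow> 'a set set" where
  "subtrees V E = {S. S \<subseteq> V \<and> S \<noteq> {} \<and> induces_connected E S}"

definition subtrees' :: "'a set \<Rightarrow> ('a \<Rightarrow> 'a \<Rightarrow> bool) \<Rightarrow> 'a set set" where
  "subtrees' V E = insert {} (subtrees V E - {{v} | v. is_leaf V E v})"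

definition avg_card :: "'a set set \<Rightarrow> real" where
  "avg_card F = (\<Sum>S\<in>F. real (card S)) / real (card F)"

definition mu :: "'a set \<Rightarrow> ('a \<Rightarrow> 'a \<Rightarrow> bool) \<Rightarrow> real" where
  "mu V E = avg_card (subtrees V E)"

definition mu' :: "'a set \<Rightarrow> ('a \<Rightarrow> 'a \<Rightarrow> bool) \<Rightarrow> real" where
  "mu' V E = avg_card (subtrees' V E)"

definition is_P4 :: "'a set \<Rightarrow> ('a \<Rightarrow> 'a \<Rightarrow> bool) \<Rightarrow> bool" where
  "is_P4 V E \<longleftrightarrow> (\<exists>f. bij_betw f {0::nat..<4} V \<and>
     (\<forall>i<4. \<forall>j<4. E (f i) (f j) \<longleftrightarrow> (i = j + 1 \<or> j = i + 1)))"

end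

theory Submission imports Defs begin

text \<open>Write \<open>X = \<Sum>S\<in>\<S>(T). (|S| - 2)\<close> for the size excess of the subtrees, \<open>N\<close> for their
number and \<open>l \<ge> 2\<close> for the number of leaves. Passing from \<open>\<S>(T)\<close> to \<open>\<S>'(T)\<close> removes \<open>l\<close>
singletons and adds the empty set, and a direct computation gives
\<open>\<mu>' - \<mu> = (N (l - 2) + X (l - 1)) / (N (N - l + 1))\<close>. The excess is at least \<open>2n - 8\<close>:
the whole tree and the two trees obtained by deleting one of two leaves contribute
\<open>3n - 8\<close>, and only the at most \<open>n\<close> singletons contribute negatively. Hence \<open>\<mu> \<le> \<mu>'\<close>, and
equality forces \<open>l = 2\<close> and \<open>n = 4\<close>, i.e. the path \<open>P\<^sub>4\<close>.\<close>

lemma leaf_neighbour_unique: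
  assumes "simple_graph V E" "is_leaf V E v" "E v x" "E v y"
  shows "x = y"
proof -
  have "finite {u\<in>V. E v u}" using assms(1) unfolding simple_graph_def by simp
  moreover have "card {u\<in>V. E v u} \<le> Suc 0" using assms(2) unfolding is_leaf_def degree_def by simp
  moreover have "x \<in> {u\<in>V. E v u}" "y \<in> {u\<in>V. E v u}"
    using assms(1,3,4) unfolding simple_graph_def by auto
  ultimately show ?thesis using card_le_Suc0_iff_eq by blast
qed

lemma non_leaf_has_two_neighbours:
  assumes "simple_graph V E" "v \<in> V" "\<not> is_leaf V E v"
  obtains x y where "x \<noteq> y" "E v x" "E v y"
proof -
  have "finite {u\<in>V. E v u}" using assms(1) unfolding simple_graph_def by simp
  moreover have "\<not> card {u\<in>V. E v u} \<le> Suc 0" using assms(2,3) unfolding is_leaf_def degree_def by simp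
  ultimately show ?thesis using that card_le_Suc0_iff_eq by blast
qed

lemma finite_edges:
  assumes "finite V"
  shows "finite (edges V E)"
proof -
  have "edges V E \<subseteq> (\<lambda>(x, y). {x, y}) ` (V \<times> V)" unfolding edges_def by auto
  thus ?thesis using assms by (meson finite_SigmaI finite_imageI finite_subset)
qed

lemma sum_degree_eq_twice_card_edges:
  assumes sg: "simple_graph V E"
  shows "(\<Sum>v\<in>V. degree V E v) = 2 * card (edges V E)"
proof -
  have fin: "finite V" using sg simple_graph_def by auto
  define A where "A = Sigma V (\<lambda>x. {y\<in>V. E x y})"
  define F where "F e = {p\<in>A. {fst p, snd p} = e}" for e
  have "(\<Sum>v\<in>V. degree V E v) = card A" unfolding A_def degree_def using fin by simp
  also have "A = (\<Union>e\<in>edges V E. F e)" unfolding A_def F_def edges_def by auto blast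
  also have "card \<dots> = (\<Sum>e\<in>edges V E. card (F e))"
    by (rule card_UN_disjoint) (use fin finite_edges in \<open>auto simp: A_def F_def\<close>)
  also have "\<dots> = (\<Sum>e\<in>edges V E. 2)"
  proof (rule sum.cong[OF refl])
    fix e assume "e \<in> edges V E"
    then obtain x y where e: "e = {x, y}" "x \<in> V" "y \<in> V" "E x y" unfolding edges_def by auto
    have xy: "x \<noteq> y" "E y x" using e sg unfolding simple_graph_def by auto
    have "F e = {(x, y), (y, x)}" unfolding F_def A_def using e xy by (auto simp: doubleton_eq_iff)
    thus "card (F e) = 2" using xy by simp
  qed
  finally show ?thesis by simp
qed

lemma degree_pos_if_connected:
  assumes sg: "simple_graph V E" and conn: "induces_connected E V"
    and V: "2 \<le> card V" and x: "x \<in> V"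
  shows "1 \<le> degree V E x"
proof -
  have fin: "finite V" using sg simple_graph_def by auto
  obtain y where y: "y \<in> V" "y \<noteq> x"
  proof -
    have "\<not> card V \<le> Suc 0" using V by simp
    then show ?thesis using that x fin card_le_Suc0_iff_eq by metis
  qed
  have "(\<lambda>u v. u \<in> V \<and> v \<in> V \<and> E u v)\<^sup>*\<^sup>* x y"
    using conn x y unfolding induces_connected_def by auto
  then obtain z where "z \<in> V" "E x z" using y(2)
    by (metis (no_types, lifting) converse_rtranclpE)
  hence "{u\<in>V. E x u} \<noteq> {}" by blast
  moreover have "finite {u\<in>V. E x u}" using fin by simp
  ultimately show ?thesis unfolding degree_def by (simp add: Suc_leI card_gt_0_iff)
qed

text \<open>With \<open>l\<close> leaves the degree sum \<open>2 (n - 1)\<close> is at least \<open>l + 2 (n - l)\<close>, so \<open>l \<ge> 2\<close>.\<close>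

lemma tree_has_two_leaves:
  assumes t: "is_tree V E" and n: "2 \<le> card V"
  obtains a b where "a \<noteq> b" "is_leaf V E a" "is_leaf V E b"
proof -
  have sg: "simple_graph V E" and conn: "induces_connected E V"
    and ec: "card (edges V E) + 1 = card V" using t is_tree_def by auto
  have fin: "finite V" using sg simple_graph_def by auto
  define L where "L = {v\<in>V. degree V E v \<le> 1}"
  have finL: "finite L" "L \<subseteq> V" using fin L_def by auto
  have "(\<Sum>v\<in>L. 1) + (\<Sum>v\<in>V-L. 2) \<le> (\<Sum>v\<in>L. degree V E v) + (\<Sum>v\<in>V-L. degree V E v)"
    using degree_pos_if_connected[OF sg conn n] finL
    by (intro add_mono sum_mono) (auto simp: L_def)
  also have "\<dots> = 2 * card (edges V E)"
    using sum.subset_diff[OF finL(2) fin, of "degree V E"] sum_degree_eq_twice_card_edges[OF sg]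
    by simp
  finally have "card L + 2 * (card V - card L) \<le> 2 * card (edges V E)"
    using card_Diff_subset[OF finL(1,2)] by simp
  moreover have "card L \<le> card V" using finL fin card_mono by blast
  ultimately have "\<not> card L \<le> Suc 0" using ec by linarith
  then obtain a b where "a \<in> L" "b \<in> L" "a \<noteq> b" using card_le_Suc0_iff_eq[OF finL(1)] by blast
  thus ?thesis using that unfolding L_def is_leaf_def by blast
qed

lemma connected_remove_leaf:
  assumes sg: "simple_graph V E" and conn: "induces_connected E V" and leaf: "is_leaf V E v"
  shows "induces_connected E (V - {v})"
  unfolding induces_connected_def
proof (intro ballI)
  let ?R = "\<lambda>u w. u \<in> V \<and> w \<in> V \<and> E u w"
  let ?R' = "\<lambda>u w. u \<in> V - {v} \<and> w \<in> V - {v} \<and> E u w"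
  fix x y assume x: "x \<in> V - {v}" and y: "y \<in> V - {v}"
  \<comment> \<open>A walk entering the leaf \<open>v\<close> must leave it towards the neighbour it came from.\<close>
  have "(z \<noteq> v \<longrightarrow> ?R'\<^sup>*\<^sup>* x z) \<and> (z = v \<longrightarrow> (\<forall>w. E v w \<longrightarrow> ?R'\<^sup>*\<^sup>* x w))"
    if "?R\<^sup>*\<^sup>* x z" for z
    using that
  proof (induction rule: rtranclp_induct)
    case base
    then show ?case using x by auto
  next
    case (step y z)
    show ?case
    proof (cases "y = v")
      case True
      then show ?thesis using step sg unfolding simple_graph_def by auto
    next
      case False
      hence ry: "?R'\<^sup>*\<^sup>* x y" using step by auto
      show ?thesis
      proof (cases "z = v")
        case True
        have "E v y" using step True sg unfolding simple_graph_def by auto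
        then show ?thesis using True ry leaf_neighbour_unique[OF sg leaf] by auto
      next
        case False
        have "?R' y z" using step False \<open>y \<noteq> v\<close> by auto
        then show ?thesis using ry False by (simp add: rtranclp.rtrancl_into_rtrancl)
      qed
    qed
  qed
  moreover have "?R\<^sup>*\<^sup>* x y" using conn x y unfolding induces_connected_def by auto
  ultimately show "?R'\<^sup>*\<^sup>* x y" using y by auto
qed

lemma finite_subtrees: "finite V \<Longrightarrow> finite (subtrees V E)"
  unfolding subtrees_def by (rule finite_subset[of _ "Pow V"]) auto

lemma singleton_in_subtrees: "v \<in> V \<Longrightarrow> {v} \<in> subtrees V E"
  unfolding subtrees_def induces_connected_def by auto

lemma sum_card_minus_two_ge:
  assumes "finite V" "F \<subseteq> Pow V" "{} \<notin> F"
  shows "- real (card V) \<le> (\<Sum>S\<in>F. real (card S) - 2)"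
proof -
  have finF: "finite F" using assms(1,2) finite_subset by blast
  have "- real (card V) \<le> - real (card (F \<inter> {S. card S = 1}))"
  proof -
    have "F \<inter> {S. card S = 1} \<subseteq> (\<lambda>v. {v}) ` V" using assms(2) by (auto simp: card_1_singleton_iff)
    hence "card (F \<inter> {S. card S = 1}) \<le> card V"
      using assms(1) by (meson card_image_le card_mono finite_imageI le_trans)
    thus ?thesis by simp
  qed
  also have "\<dots> = (\<Sum>S\<in>F. - (if card S = 1 then 1 else 0))"
    using finF by (simp add: sum.If_cases sum_negf)
  also have "\<dots> \<le> (\<Sum>S\<in>F. real (card S) - 2)"
  proof (rule sum_mono)
    fix S assume S: "S \<in> F"
    have "S \<subseteq> V" "S \<noteq> {}" using S assms by auto
    hence "finite S" "S \<noteq> {}" using assms(1) finite_subset by auto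
    hence "1 \<le> card S" by (simp add: Suc_leI card_gt_0_iff)
    thus "- (if card S = 1 then 1 else 0) \<le> real (card S) - 2" by auto
  qed
  finally show ?thesis .
qed

lemma subtrees_size_excess_ge:
  assumes t: "is_tree V E" and ab: "a \<noteq> b" "is_leaf V E a" "is_leaf V E b"
  shows "2 * real (card V) - 8 \<le> (\<Sum>S\<in>subtrees V E. real (card S) - 2)"
proof -
  have sg: "simple_graph V E" and conn: "induces_connected E V" and Vne: "V \<noteq> {}"
    using t unfolding is_tree_def by auto
  have fin: "finite V" using sg simple_graph_def by auto
  have aV: "a \<in> V" and bV: "b \<in> V" using ab unfolding is_leaf_def by auto
  define B where "B = {V, V - {a}, V - {b}}"
  have B: "B \<subseteq> subtrees V E"
    using connected_remove_leaf[OF sg conn] ab aV bV conn Vne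
    unfolding B_def subtrees_def by blast
  have "(\<Sum>S\<in>B. real (card S) - 2) = 3 * real (card V) - 8"
  proof -
    have "Suc 0 \<le> card V" using aV fin card_gt_0_iff[of V] by auto
    hence "real (card (V - {a})) = real (card V) - 1" "real (card (V - {b})) = real (card V) - 1"
      using aV bV fin by (simp_all add: of_nat_diff)
    moreover have "V \<noteq> V - {a}" "V \<noteq> V - {b}" "V - {a} \<noteq> V - {b}" using aV bV ab(1) by auto
    ultimately show ?thesis unfolding B_def by simp
  qed
  moreover have "- real (card V) \<le> (\<Sum>S\<in>subtrees V E - B. real (card S) - 2)"
    by (rule sum_card_minus_two_ge[OF fin]) (auto simp: subtrees_def)
  moreover have "(\<Sum>S\<in>subtrees V E. real (card S) - 2)
      = (\<Sum>S\<in>B. real (card S) - 2) + (\<Sum>S\<in>subtrees V E - B. real (card S) - 2)"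
    using sum.subset_diff[OF B finite_subtrees[OF fin]] by (simp add: add.commute)
  ultimately show ?thesis by linarith
qed

lemma avg_card_le_remove_singletons_insert_empty:
  assumes finF: "finite F" and LF: "L \<subseteq> F" and emp: "{} \<notin> F"
    and L1: "\<forall>S\<in>L. card S = 1" and l2: "2 \<le> card L"
    and excess: "0 \<le> (\<Sum>S\<in>F. real (card S) - 2)"
  shows "avg_card F \<le> avg_card (insert {} (F - L))"
    and "avg_card F = avg_card (insert {} (F - L)) \<Longrightarrow>
           card L = 2 \<and> (\<Sum>S\<in>F. real (card S) - 2) = 0"
proof -
  define N where "N = real (card F)"
  define l where "l = real (card L)"
  define W where "W = (\<Sum>S\<in>F. real (card S))"
  define X where "X = (\<Sum>S\<in>F. real (card S) - 2)"
  have finL: "finite L" using finF LF finite_subset by blast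
  have Nl: "l \<le> N" unfolding N_def l_def using card_mono[OF finF LF] by simp
  have l2': "2 \<le> l" using l2 unfolding l_def by simp
  have WX: "W = 2 * N + X" unfolding W_def X_def N_def by (simp add: sum_subtractf)
  have pos: "0 < N" "0 < N - l + 1" using Nl l2' by simp_all
  have avg': "avg_card (insert {} (F - L)) = (W - l) / (N - l + 1)"
  proof -
    have "(\<Sum>S\<in>L. real (card S)) = l" using L1 unfolding l_def by simp
    hence "(\<Sum>S\<in>F - L. real (card S)) = W - l"
      unfolding W_def using sum.subset_diff[OF LF finF, of "\<lambda>S. real (card S)"] by simp
    moreover have "card (insert {} (F - L)) = card F - card L + 1"
      using emp finF card_Diff_subset[OF finL LF] by simp
    ultimately show ?thesis
      unfolding avg_card_def N_def l_def using emp finF card_mono[OF finF LF]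
      by (simp add: of_nat_diff)
  qed
  have avg: "avg_card F = W / N" unfolding avg_card_def W_def N_def ..
  have diff: "avg_card (insert {} (F - L)) - avg_card F
      = (N * (l - 2) + X * (l - 1)) / (N * (N - l + 1))"
    unfolding avg' avg WX using pos by (simp add: field_simps)
  have den: "0 < N * (N - l + 1)" using pos by simp
  have nonneg: "0 \<le> N * (l - 2)" "0 \<le> X * (l - 1)" using Nl l2' excess unfolding X_def by simp_all
  show "avg_card F \<le> avg_card (insert {} (F - L))"
    using diff den nonneg by (smt (verit) divide_nonneg_pos)
  assume "avg_card F = avg_card (insert {} (F - L))"
  hence "N * (l - 2) + X * (l - 1) = 0" using diff pos by simp
  hence "N * (l - 2) = 0" "X * (l - 1) = 0" using nonneg by linarith+
  hence "l = 2" "X = 0" using pos(1) l2' by simp_all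
  thus "card L = 2 \<and> (\<Sum>S\<in>F. real (card S) - 2) = 0" unfolding l_def X_def by simp
qed

lemma is_P4_if_path:
  assumes dist: "distinct [a, b, c, d]"
    and tab: "\<And>x y. x \<in> {a, b, c, d} \<Longrightarrow> y \<in> {a, b, c, d} \<Longrightarrow>
        E x y \<longleftrightarrow> ({x, y} = {a, b} \<or> {x, y} = {b, c} \<or> {x, y} = {c, d})"
  shows "is_P4 {a, b, c, d} E"
proof -
  define f where "f i = [a, b, c, d] ! i" for i
  have s4: "{0..<4::nat} = {0, 1, 2, 3}" by auto
  have bij: "bij_betw f {0..<4} {a, b, c, d}"
    using dist unfolding bij_betw_def s4 f_def by auto
  have all4: "(\<forall>i<4. P i) \<longleftrightarrow> P 0 \<and> P 1 \<and> P 2 \<and> P 3" for P :: "nat \<Rightarrow> bool"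
    by (auto simp: eval_nat_numeral less_Suc_eq)
  have "E a b" "E b a" "E b c" "E c b" "E c d" "E d c" using tab by auto
  moreover have "\<not> E a a" "\<not> E b b" "\<not> E c c" "\<not> E d d" "\<not> E a c" "\<not> E c a"
      "\<not> E a d" "\<not> E d a" "\<not> E b d" "\<not> E d b"
    using tab[of a a] tab[of b b] tab[of c c] tab[of d d] tab[of a c] tab[of c a]
      tab[of a d] tab[of d a] tab[of b d] tab[of d b] dist
    by (auto simp: doubleton_eq_iff)
  ultimately have "\<forall>i<4. \<forall>j<4. E (f i) (f j) \<longleftrightarrow> (i = j + 1 \<or> j = i + 1)"
    unfolding all4 f_def by simp
  then show ?thesis unfolding is_P4_def using bij by blast
qed

lemma is_P4_if_two_leaves:
  assumes sg: "simple_graph V E" and V: "V = {a, b, c, d}" and dist: "distinct [a, b, c, d]"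
    and leaves: "is_leaf V E a" "is_leaf V E b"
    and inner: "\<not> is_leaf V E c" "\<not> is_leaf V E d"
  shows "is_P4 V E"
proof -
  have memb: "x \<in> V \<and> y \<in> V \<and> x \<noteq> y" if "E x y" for x y
    using sg that unfolding simple_graph_def by blast
  have sym: "E x y \<longleftrightarrow> E y x" for x y using sg unfolding simple_graph_def by blast
  have la: "\<not> (E a x \<and> E a y)" and lb: "\<not> (E b x \<and> E b y)" if "x \<noteq> y" for x y
    using that leaf_neighbour_unique[OF sg] leaves by blast+
  have "(E c a \<and> E c b) \<or> (E c a \<and> E c d) \<or> (E c b \<and> E c d)"
  proof -
    obtain y z where "y \<noteq> z" "E c y" "E c z"
      using non_leaf_has_two_neighbours[OF sg _ inner(1)] V by blast
    moreover have "y \<in> {a, b, d}" "z \<in> {a, b, d}" using memb calculation V by auto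
    ultimately show ?thesis by auto
  qed
  moreover have "(E d a \<and> E d b) \<or> (E d a \<and> E d c) \<or> (E d b \<and> E d c)"
  proof -
    obtain y z where "y \<noteq> z" "E d y" "E d z"
      using non_leaf_has_two_neighbours[OF sg _ inner(2)] V by blast
    moreover have "y \<in> {a, b, c}" "z \<in> {a, b, c}" using memb calculation V by auto
    ultimately show ?thesis by auto
  qed
  moreover have "E c a = E a c" "E c b = E b c" "E d a = E a d" "E d b = E b d"
      "E d c = E c d" "E b a = E a b"
    using sym by blast+
  ultimately have "(E a c \<and> E c d \<and> E b d \<and> \<not> E a b \<and> \<not> E a d \<and> \<not> E b c)
      \<or> (E a d \<and> E c d \<and> E b c \<and> \<not> E a b \<and> \<not> E a c \<and> \<not> E b d)"
    using la[of b c] la[of b d] la[of c d] lb[of a c] lb[of a d] lb[of c d] dist by auto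
  then show ?thesis
  proof
    assume e: "E a c \<and> E c d \<and> E b d \<and> \<not> E a b \<and> \<not> E a d \<and> \<not> E b c"
    have "is_P4 {a, c, d, b} E"
      by (rule is_P4_if_path) (use e dist memb sym in \<open>auto simp: doubleton_eq_iff\<close>)
    thus ?thesis using V by (simp add: insert_commute)
  next
    assume e: "E a d \<and> E c d \<and> E b c \<and> \<not> E a b \<and> \<not> E a c \<and> \<not> E b d"
    have "is_P4 {a, d, c, b} E"
      by (rule is_P4_if_path) (use e dist memb sym in \<open>auto simp: doubleton_eq_iff\<close>)
    thus ?thesis using V by (simp add: insert_commute)
  qed
qed

lemma is_P4_if_card_4_two_leaves:
  assumes sg: "simple_graph V E" and V: "card V = 4"
    and ab: "a \<noteq> b" "is_leaf V E a" "is_leaf V E b"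
    and only: "\<And>v. is_leaf V E v \<Longrightarrow> v \<in> {a, b}"
  shows "is_P4 V E"
proof -
  have fin: "finite V" using sg unfolding simple_graph_def by auto
  have "{a, b} \<subseteq> V" using ab unfolding is_leaf_def by auto
  hence "card (V - {a, b}) = 2" using V ab(1) fin by (simp add: card_Diff_subset)
  then obtain c d where cd: "V - {a, b} = {c, d}" "c \<noteq> d" by (auto simp: card_2_iff)
  have "V = {a, b, c, d}" using cd \<open>{a, b} \<subseteq> V\<close> by auto
  moreover have "distinct [a, b, c, d]" using cd ab(1) by auto
  moreover have "\<not> is_leaf V E c" "\<not> is_leaf V E d" using only cd by auto
  ultimately show ?thesis using is_P4_if_two_leaves[OF sg _ _ ab(2,3)] by blast
qed

theorem mainTheorem6:
  fixes V :: "'a set" and E :: "'a \<Rightarrow> 'a \<Rightarrow> bool"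
  assumes "is_tree V E" and "card V \<ge> 4"
  shows "mu V E \<le> mu' V E \<and> (mu V E = mu' V E \<longrightarrow> is_P4 V E)"
proof -
  have sg: "simple_graph V E" using assms(1) unfolding is_tree_def by auto
  have fin: "finite V" using sg unfolding simple_graph_def by auto
  have "2 \<le> card V" using assms(2) by simp
  then obtain a b where ab: "a \<noteq> b" "is_leaf V E a" "is_leaf V E b"
    using tree_has_two_leaves[OF assms(1)] by blast
  define L where "L = {{v} | v. is_leaf V E v}"
  have L: "L \<subseteq> subtrees V E" "\<forall>S\<in>L. card S = 1"
    using singleton_in_subtrees unfolding L_def is_leaf_def by auto
  have ab_L: "{{a}, {b}} \<subseteq> L" using ab unfolding L_def by auto
  have finL: "finite L" using L(1) finite_subtrees[OF fin] finite_subset by blast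
  have l2: "2 \<le> card L" using card_mono[OF finL ab_L] ab(1) by simp
  have excess: "2 * real (card V) - 8 \<le> (\<Sum>S\<in>subtrees V E. real (card S) - 2)"
    using subtrees_size_excess_ge[OF assms(1) ab] .
  note avg = avg_card_le_remove_singletons_insert_empty[OF finite_subtrees[OF fin] L(1) _ L(2) l2]
  have "mu' V E = avg_card (insert {} (subtrees V E - L))"
    unfolding mu'_def subtrees'_def L_def ..
  moreover have "{} \<notin> subtrees V E" unfolding subtrees_def by auto
  ultimately have mu: "mu V E \<le> mu' V E" "mu V E = mu' V E \<Longrightarrow>
      card L = 2 \<and> (\<Sum>S\<in>subtrees V E. real (card S) - 2) = 0"
    using avg excess assms(2) unfolding mu_def by simp_all
  moreover have "is_P4 V E" if "mu V E = mu' V E"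
  proof (rule is_P4_if_card_4_two_leaves[OF sg _ ab])
    show "card V = 4" using mu(2)[OF that] excess assms(2) by simp
    have "L = {{a}, {b}}" using card_subset_eq[OF finL ab_L] mu(2)[OF that] ab(1) by simp
    thus "v \<in> {a, b}" if "is_leaf V E v" for v using that unfolding L_def by blast
  qed
  ultimately show ?thesis by blast
qed

end
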